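(* Let $d\ge2$, $T>1$, $\eta,\beta>0$, and let $\mathbf r_1,\mathbf r_2,\dots\in[0,1]^d\setminus\{\mathbf 0\}$ be any sequence of returns. Then for all $t\ge1$, the regularizer $\Phi_t$ of DONS (as in the context) is a self-concordant function on the interior of $\mathcal C_{d-1}$ with constant $M_{\Phi_t}\le\sqrt{\eta e}$.
   Context: Notation. $\mathcal C_{d-1}=\{\mathbf u\in\mathbb R^{d-1}: u_i\ge0,\ \sum_iu_i\le1\}$; for $\mathbf v\in\mathbb R^{d-1}$, $\bar{\mathbf v}=(v_1,\dots,v_{d-1},1-\sum_{i=1}^{d-1}v_i)\in\mathbb R^d$, i.e. $\bar{\mathbf v}=\mathbf e_d+J^\top\mathbf v$ with $J=[I_{d-1}\ \ -\mathbf 1]$; $\mathbf 1$ is all-ones; $\|\mathbf x\|_A=\sqrt{\mathbf x^\top A\mathbf x}$. Self-concordance: for a convex compact $\mathcal K$ with nonempty interior, a convex $f:\operatorname{int}\mathcal K\to\mathbb R$ is self-concordant with constant $M\ge0$ if $f$ is $C^3$, $f(\mathbf x_k)\to+\infty$ as $\mathbf x_k\to\mathbf x\in\partial\mathcal K$, and $|\nabla^3f(\mathbf x)[\mathbf u,\mathbf u,\mathbf u]|\le2M\|\mathbf u\|^3_{\nabla^2f(\mathbf x)}$ for all $\mathbf x\in\operatorname{int}\mathcal K$, $\mathbf u$. DONS (parameters $\eta,\beta>0$, horizon $T$). Set $\mathbf w_1=\mathbf 1/d\in\mathbb R^{d-1}$, $\boldsymbol\rho_0=d\mathbf 1\in\mathbb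 R^d$. For $t\ge0$ let $\eta_{t,i}=\eta\exp(\log_T(\rho_{t,i}/d))$, $\Psi_t(\mathbf x)=-\sum_{i=1}^d\ln(\bar x_i)/\eta_{t,i}$, $\Phi_t(\mathbf x)=\Psi_t(\mathbf x)+\frac{\beta d}{8}\|\mathbf x\|^2+\frac\beta8\sum_{s=1}^t\langle\mathbf g_s,\mathbf x-\mathbf w_s\rangle^2$. At round $t=1,2,\dots$: play $\mathbf u_t=(1-\frac1T)\mathbf w_t+\frac1{dT}\mathbf 1$; observe $\mathbf r_t$, set $\mathbf g_t=J\mathbf r_t/\langle\mathbf r_t,\bar{\mathbf u}_t\rangle$; for $i\in\{1,\dots,d\}$, $\rho_{t,i}=1/\bar u_{t,i}$ if $2\rho_{t-1,i}<1/\bar u_{t,i}$, else $\rho_{t,i}=\rho_{t-1,i}$; set $\boldsymbol\nabla_t=\nabla\Phi_t(\mathbf w_t)+\sum_{s=1}^t(\mathbf g_s-\nabla\Psi_s(\mathbf w_s)+\nabla\Psi_{s-1}(\mathbf w_s))$ and $\mathbf w_{t+1}=\mathbf w_t-\frac{(\nabla^2\Phi_t(\mathbf w_t))^{-1}\boldsymbol\nabla_t}{1+4\sqrt{e\eta}\|\boldsymbol\nabla_t\|_{(\nabla^2\Phi_t(\mathbf w_t))^{-1}}}$. *)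

theory Defs
  imports "HOL-Analysis.Analysis"
begin

text \<open>Conventions. The ambient space R^(d-1) is real^'n (so d - 1 = CARD('n) >= 1, i.e. d >= 2),
 and R^d is real^('n option), the coordinate None playing the role of the d-th coordinate.\<close>

definition dim_d :: "'n::finite itself \<Rightarrow> real" where
  "dim_d _ = real CARD('n option)"

definition bar :: "real^'n::finite \<Rightarrow> real^('n option)" where
  "bar v = (\<chi> i. case i of Some j \<Rightarrow> v$j | None \<Rightarrow> 1 - (\<Sum>j\<in>UNIV. v$j))"

text \<open>J = [I_(d-1)  -1], so (J r)_j = r_j - r_d\<close>
definition Jmap :: "real^('n::finite option) \<Rightarrow> real^'n" where
  "Jmap r = (\<chi> j. r$(Some j) - r$None)"

definition simplexC :: "(real^'n::finite) set" where
  "simplexC = {u. (\<forall>i. 0 \<le> u$i) \<and> (\<Sum>i\<in>UNIV. u$i) \<le> 1}"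

definition grad :: "(real^'n::finite \<Rightarrow> real) \<Rightarrow> real^'n \<Rightarrow> real^'n" where
  "grad f x = (\<chi> i. frechet_derivative f (at x) (axis i 1))"

definition hess :: "(real^'n::finite \<Rightarrow> real) \<Rightarrow> real^'n \<Rightarrow> real^'n^'n" where
  "hess f x = (\<chi> i j. frechet_derivative (\<lambda>y. frechet_derivative f (at y) (axis j 1)) (at x) (axis i 1))"

fun cont_diff :: "nat \<Rightarrow> ('a::real_normed_vector) set \<Rightarrow> ('a \<Rightarrow> real) \<Rightarrow> bool" where
  "cont_diff 0 S f = continuous_on S f"
| "cont_diff (Suc k) S f = ((\<forall>x\<in>S. f differentiable (at x)) \<and>
      (\<forall>v. cont_diff k S (\<lambda>x. frechet_derivative f (at x) v)))"

definition D2 :: "('a::real_normed_vector \<Rightarrow> real) \<Rightarrow> 'a \<Rightarrow> 'a \<Rightarrow> real" where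
  "D2 f x u = frechet_derivative (\<lambda>y. frechet_derivative f (at y) u) (at x) u"

definition D3 :: "('a::real_normed_vector \<Rightarrow> real) \<Rightarrow> 'a \<Rightarrow> 'a \<Rightarrow> real" where
  "D3 f x u = frechet_derivative (\<lambda>z. frechet_derivative (\<lambda>y. frechet_derivative f (at y) u) (at z) u) (at x) u"

definition self_concordant :: "('a::euclidean_space) set \<Rightarrow> ('a \<Rightarrow> real) \<Rightarrow> real \<Rightarrow> bool" where
  "self_concordant K f M \<longleftrightarrow>
     convex K \<and> compact K \<and> interior K \<noteq> {} \<and> M \<ge> 0 \<and>
     convex_on (interior K) f \<and>
     cont_diff 3 (interior K) f \<and>
     (\<forall>xs x. (\<forall>k. xs k \<in> interior K) \<longrightarrow> xs \<longlonglongrightarrow> x \<longrightarrow> x \<in> frontier K \<longrightarrow>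
        filterlim (\<lambda>k. f (xs k)) at_top sequentially) \<and>
     (\<forall>x\<in>interior K. \<forall>u. \<bar>D3 f x u\<bar> \<le> 2 * M * (sqrt (D2 f x u)) ^ 3)"

definition dons_eta :: "real \<Rightarrow> nat \<Rightarrow> real^('n::finite option) \<Rightarrow> 'n option \<Rightarrow> real" where
  "dons_eta \<eta> T rho i = \<eta> * exp (log (real T) (rho$i / dim_d TYPE('n)))"

definition dons_Psi :: "real \<Rightarrow> nat \<Rightarrow> real^('n::finite option) \<Rightarrow> real^'n \<Rightarrow> real" where
  "dons_Psi \<eta> T rho x = - (\<Sum>i\<in>UNIV. ln (bar x $ i) / dons_eta \<eta> T rho i)"

definition dons_Phi :: "real \<Rightarrow> real \<Rightarrow> nat \<Rightarrow> (nat \<Rightarrow> real^('n::finite option)) \<Rightarrow>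
    (nat \<Rightarrow> real^'n) \<Rightarrow> (nat \<Rightarrow> real^'n) \<Rightarrow> nat \<Rightarrow> real^'n \<Rightarrow> real" where
  "dons_Phi \<eta> \<beta> T rho g w t x = dons_Psi \<eta> T (rho t) x + \<beta> * dim_d TYPE('n) / 8 * (norm x)^2
      + \<beta> / 8 * (\<Sum>s\<in>{1..t}. (g s \<bullet> (x - w s))^2)"

end

(*
  Phi_t is a logarithmic barrier sum_k c_k (-ln xbar_k) of the simplex, with weights
  c_k = 1/eta_(t,k), plus convex quadratic terms. Put y_k = D xbar_k[u] / xbar_k. The third
  derivative comes from the barrier alone, D^3 Phi_t[u,u,u] = -2 sum_k c_k y_k^3, while
  D^2 Phi_t[u,u] >= sum_k c_k y_k^2 >= c_k y_k^2. If every c_k >= 1/E this gives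
  |y_k| <= sqrt E (D^2 Phi_t[u,u])^(1/2), hence |D^3 Phi_t[u,u,u]| <= 2 sqrt E (D^2 Phi_t[u,u])^(3/2).

  So it suffices that eta_(t,k) <= eta e, i.e. rho_(t,k) <= d T. This holds because
  ubar_(t,k) >= 1/(d T) as long as w_t lies in the simplex, and w_t stays in its interior:
  the bound on |y_k| shows that a step whose local norm is below 1/sqrt E cannot make any
  xbar_k vanish, and the damped Newton step of DONS is such a step.
*)

theory Submission
  imports Defs
begin

section \<open>Derivatives and convexity\<close>

lemma frechet_derivative_apply:
  "(f has_derivative f') (at x) \<Longrightarrow> frechet_derivative f (at x) v = f' v"
  by (drule frechet_derivative_at) simp

lemma frechet_derivative_eq_on_open:
  assumes "open S" "x \<in> S" "\<And>y. y \<in> S \<Longrightarrow> f y = g y" "(g has_derivative g') (at x)"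
  shows "frechet_derivative f (at x) = g'"
proof -
  have "(f has_derivative g') (at x)"
    by (rule has_derivative_transform_within_open[OF assms(4) assms(1,2)]) (use assms(3) in auto)
  then show ?thesis by (rule frechet_derivative_at[symmetric])
qed

lemma cont_diff_cong:
  assumes "open S" "\<And>x. x \<in> S \<Longrightarrow> f x = g x"
  shows "cont_diff k S f = cont_diff k S g"
  using assms(2)
proof (induction k arbitrary: f g)
  case 0
  then show ?case by (auto intro: continuous_on_cong)
next
  case (Suc k)
  have hd: "(f has_derivative f') (at x) \<longleftrightarrow> (g has_derivative f') (at x)" if "x \<in> S" for x f'
  proof
    assume "(f has_derivative f') (at x)"
    then show "(g has_derivative f') (at x)"
      by (rule has_derivative_transform_within_open[OF _ assms(1) that]) (use Suc.prems in auto)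
  next
    assume "(g has_derivative f') (at x)"
    then show "(f has_derivative f') (at x)"
      by (rule has_derivative_transform_within_open[OF _ assms(1) that]) (use Suc.prems in auto)
  qed
  have fd: "frechet_derivative f (at x) = frechet_derivative g (at x)" if "x \<in> S" for x
    unfolding frechet_derivative_def using hd[OF that] by simp
  have diff: "(\<forall>x\<in>S. f differentiable (at x)) \<longleftrightarrow> (\<forall>x\<in>S. g differentiable (at x))"
    unfolding differentiable_def using hd by auto
  have "cont_diff k S (\<lambda>x. frechet_derivative f (at x) v) = cont_diff k S (\<lambda>x. frechet_derivative g (at x) v)" for v
    by (rule Suc.IH) (simp add: fd)
  then show ?case using diff by simp
qed

lemma cont_diff_SucI:
  assumes "open S" "\<And>x. x \<in> S \<Longrightarrow> (f has_derivative (\<lambda>v. f' v x)) (at x)"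
    and "\<And>v. cont_diff k S (f' v)"
  shows "cont_diff (Suc k) S f"
proof -
  have "frechet_derivative f (at x) v = f' v x" if "x \<in> S" for x v
    using assms(2)[OF that] by (rule frechet_derivative_apply)
  then have "cont_diff k S (\<lambda>x. frechet_derivative f (at x) v) = cont_diff k S (f' v)" for v
    by (intro cont_diff_cong[OF assms(1)])
  moreover have "\<forall>x\<in>S. f differentiable (at x)"
    using assms(2) by (auto simp: differentiable_def)
  ultimately show ?thesis using assms(3) by simp
qed

lemma linear_eq_sum_axis:
  fixes f :: "real^'n::finite \<Rightarrow> real"
  assumes "linear f"
  shows "f p = (\<Sum>i\<in>UNIV. p $ i * f (axis i 1))"
proof -
  have "f p = f (\<Sum>i\<in>UNIV. p $ i *\<^sub>R axis i 1)"
    using basis_expansion[of p] by (simp add: scalar_mult_eq_scaleR)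
  then show ?thesis
    using assms by (simp add: real_vector.linear_sum linear_cmul)
qed

lemma convex_on_comp_affine:
  fixes l :: "'a::real_vector \<Rightarrow> real" and h :: "real \<Rightarrow> real"
  assumes "convex_on I h" "convex S" "\<And>x. x \<in> S \<Longrightarrow> l x \<in> I"
    and "\<And>x y u v. u + v = 1 \<Longrightarrow> l (u *\<^sub>R x + v *\<^sub>R y) = u * l x + v * l y"
  shows "convex_on S (\<lambda>x. h (l x))"
  unfolding convex_on_def
proof (intro conjI assms(2) ballI allI impI)
  fix x y and u v :: real assume xy: "x \<in> S" "y \<in> S" and uv: "0 \<le> u" "0 \<le> v" "u + v = 1"
  have "h (l (u *\<^sub>R x + v *\<^sub>R y)) = h (u *\<^sub>R l x + v *\<^sub>R l y)" using assms(4)[OF uv(3)] by simp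
  also have "\<dots> \<le> u * h (l x) + v * h (l y)"
    using assms(1) assms(3)[OF xy(1)] assms(3)[OF xy(2)] uv unfolding convex_on_def by blast
  finally show "h (l (u *\<^sub>R x + v *\<^sub>R y)) \<le> u * h (l x) + v * h (l y)" .
qed

lemma convex_on_sum_fun:
  assumes "finite A" "convex S" "\<And>i. i \<in> A \<Longrightarrow> convex_on S (f i)"
  shows "convex_on S (\<lambda>x. \<Sum>i\<in>A. f i x)"
  using assms(1,3)
proof (induction A rule: finite_induct)
  case empty
  then show ?case using assms(2) by (simp add: convex_on_const)
next
  case (insert i A)
  then show ?case by (simp add: convex_on_add)
qed

lemma convex_on_inner_diff_square:
  fixes g w :: "'a::real_inner"
  assumes "convex S"
  shows "convex_on S (\<lambda>x. (g \<bullet> (x - w))^2)"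
proof (rule convex_on_comp_affine[OF convex_power2 assms])
  fix x y :: 'a and u v :: real assume "u + v = 1"
  then have "w = u *\<^sub>R w + v *\<^sub>R w" by (metis scaleR_add_left scaleR_one)
  then have "u *\<^sub>R x + v *\<^sub>R y - w = u *\<^sub>R (x - w) + v *\<^sub>R (y - w)"
    by (metis (no_types, lifting) add_diff_add scaleR_right_diff_distrib)
  then show "g \<bullet> (u *\<^sub>R x + v *\<^sub>R y - w) = u * (g \<bullet> (x - w)) + v * (g \<bullet> (y - w))"
    by (simp add: inner_add_right)
qed auto

section \<open>The simplex in barycentric coordinates\<close>

(* bar x = e_d + J^T x, and bar_lin v k is the coordinate k of J^T v. *)
definition bar_lin :: "real^'n::finite \<Rightarrow> 'n option \<Rightarrow> real" where
  "bar_lin v k = (case k of Some j \<Rightarrow> v$j | None \<Rightarrow> - (\<Sum>j\<in>UNIV. v$j))"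

lemma has_derivative_bar_nth:
  "((\<lambda>x. bar x $ k) has_derivative (\<lambda>v. bar_lin v k)) (at x within X)"
  by (cases k)
    (auto simp: bar_def bar_lin_def sum_negf
      intro!: derivative_eq_intros bounded_linear_imp_has_derivative)

lemma continuous_on_bar_nth: "continuous_on X (\<lambda>x. bar x $ k)"
  using has_derivative_bar_nth by (rule has_derivative_continuous_on)

lemma bar_diff_scaleR: "bar (x - a *\<^sub>R p) $ k = bar x $ k - a * bar_lin p k"
  by (cases k) (auto simp: bar_lin_def bar_def sum_subtractf sum_distrib_left algebra_simps)

lemma bar_convex_comb: "u + v = 1 \<Longrightarrow> bar (u *\<^sub>R x + v *\<^sub>R y) $ k = u * bar x $ k + v * bar y $ k"
  by (cases k) (auto simp: bar_def sum.distrib sum_distrib_left algebra_simps)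

lemma bar_lin_axis: "bar_lin (axis j 1) (Some j) = 1" "bar_lin (axis j 1) None = -1"
  by (auto simp: bar_lin_def axis_def)

lemma simplexC_eq_bar_nonneg: "simplexC = {x. \<forall>k. 0 \<le> bar x $ k}"
  by (auto simp: simplexC_def bar_def split_option_all)

lemma bar_nth_le_1:
  assumes "x \<in> simplexC" shows "bar x $ k \<le> 1"
proof -
  have "x $ j \<le> (\<Sum>j\<in>UNIV. x $ j)" "0 \<le> (\<Sum>j\<in>UNIV. x $ j)" "(\<Sum>j\<in>UNIV. x $ j) \<le> 1" for j
    using assms by (auto simp: simplexC_def intro: member_le_sum sum_nonneg)
  then show ?thesis by (cases k) (auto simp: bar_def intro: order_trans)
qed

lemma closed_simplexC: "closed simplexC"
  unfolding simplexC_eq_bar_nonneg Collect_all_eq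
  by (intro closed_INT ballI closed_Collect_le continuous_on_const continuous_on_bar_nth)

lemma compact_simplexC: "compact (simplexC :: (real^'n::finite) set)"
proof -
  have "simplexC \<subseteq> cbox (0::real^'n) 1"
  proof
    fix x :: "real^'n" assume x: "x \<in> simplexC"
    have "0 \<le> x $ i \<and> x $ i \<le> 1" for i
      using bar_nth_le_1[OF x, of "Some i"] x by (auto simp: simplexC_def bar_def)
    then show "x \<in> cbox 0 1" by (simp add: mem_box_cart)
  qed
  then show ?thesis
    using closed_simplexC by (metis bounded_cbox bounded_subset compact_eq_bounded_closed)
qed

lemma convex_simplexC: "convex simplexC"
  unfolding convex_def simplexC_eq_bar_nonneg by (auto simp: bar_convex_comb)

definition simplexC_interior :: "(real^'n::finite) set" where
  "simplexC_interior = {x. \<forall>k. 0 < bar x $ k}"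

lemma bar_nonzero_simplexC_interior: "x \<in> simplexC_interior \<Longrightarrow> bar x $ k \<noteq> 0"
  unfolding simplexC_interior_def by (metis less_irrefl mem_Collect_eq)

lemma open_simplexC_interior: "open simplexC_interior"
  unfolding simplexC_interior_def Collect_all_eq
  by (intro open_INT ballI open_Collect_less continuous_on_const continuous_on_bar_nth) simp

lemma convex_simplexC_interior: "convex simplexC_interior"
proof (unfold convex_def simplexC_interior_def, clarsimp simp: bar_convex_comb)
  fix x y :: "real^'n" and u v :: real and k
  assume "\<forall>k. 0 < bar x $ k" "\<forall>k. 0 < bar y $ k" "0 \<le> u" "0 \<le> v" "u + v = 1"
  then show "0 < u * bar x $ k + v * bar y $ k"
    by (smt (verit) mult_nonneg_nonneg mult_pos_pos)
qed

lemma simplexC_interior_subset: "simplexC_interior \<subseteq> simplexC"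
  by (auto simp: simplexC_eq_bar_nonneg simplexC_interior_def less_imp_le)

lemma simplexC_interior_nonempty: "simplexC_interior \<noteq> {}"
proof -
  have "bar (\<chi> i. 1 / (real CARD('n) + 1)) $ k > 0" for k :: "'n::finite option"
    by (cases k) (auto simp: bar_def field_simps)
  then show ?thesis by (auto simp: simplexC_interior_def)
qed

lemma interior_simplexC: "interior simplexC = simplexC_interior"
proof
  show "simplexC_interior \<subseteq> interior simplexC"
    using open_simplexC_interior simplexC_interior_subset by (rule interior_maximal[rotated])
next
  show "interior simplexC \<subseteq> simplexC_interior"
  proof
    fix x assume "x \<in> interior simplexC"
    then obtain e where e: "e > 0" "ball x e \<subseteq> simplexC" by (meson mem_interior)
    have "0 < bar x $ k" for k
    proof (rule ccontr)
      assume "\<not> 0 < bar x $ k"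
      moreover have "x \<in> simplexC" using e centre_in_ball by blast
      ultimately have k0: "bar x $ k = 0" by (simp add: simplexC_eq_bar_nonneg antisym not_less)
      \<comment> \<open>moving by e/2 along the edge direction that decreases bar x $ k leaves the simplex\<close>
      define j where "j = (case k of Some i \<Rightarrow> i | None \<Rightarrow> undefined)"
      define a where "a = (case k of Some _ \<Rightarrow> e/2 | None \<Rightarrow> - e/2)"
      define y where "y = x - a *\<^sub>R axis j 1"
      have "dist x y = e/2" using e by (cases k) (auto simp: y_def a_def dist_norm norm_axis_1)
      then have "y \<in> simplexC" using e by auto
      moreover have "bar y $ k = bar x $ k - a * bar_lin (axis j 1) k"
        unfolding y_def by (rule bar_diff_scaleR)
      then have "bar y $ k = - e/2"
        using k0 by (cases k) (auto simp: a_def j_def bar_lin_axis)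
      ultimately show False using e by (auto simp: simplexC_eq_bar_nonneg dest: spec[where x=k])
    qed
    then show "x \<in> simplexC_interior" by (simp add: simplexC_interior_def)
  qed
qed

lemma frontier_simplexC_bar_zero:
  assumes "x \<in> frontier simplexC" obtains k where "bar x $ k = 0"
proof -
  have "x \<in> simplexC" "x \<notin> simplexC_interior"
    using assms by (auto simp: frontier_def interior_simplexC closure_closed[OF closed_simplexC])
  then obtain k where "\<not> 0 < bar x $ k" "0 \<le> bar x $ k"
    unfolding simplexC_interior_def simplexC_eq_bar_nonneg by blast
  then show ?thesis using that by simp
qed

lemma bar_mix_uniform:
  fixes w :: "real^'n::finite"
  shows "bar ((1 - s) *\<^sub>R w + (s / real CARD('n option)) *\<^sub>R (\<chi> i. 1)) $ k
    = (1 - s) * bar w $ k + s / real CARD('n option)"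
proof (cases k)
  case None
  have "(\<Sum>j\<in>UNIV. (1 - s) * w $ j + s / real CARD('n option))
      = (1 - s) * (\<Sum>j\<in>UNIV. w $ j) + real CARD('n) * (s / real CARD('n option))"
    by (simp add: sum.distrib sum_distrib_left)
  then show ?thesis
    by (simp add: None bar_def field_simps)
qed (simp add: bar_def)

section \<open>A weighted logarithmic barrier plus quadratic terms\<close>

definition regularizer :: "('n option \<Rightarrow> real) \<Rightarrow> real \<Rightarrow> real \<Rightarrow> nat \<Rightarrow> (nat \<Rightarrow> real^'n) \<Rightarrow>
    (nat \<Rightarrow> real^'n) \<Rightarrow> real^'n::finite \<Rightarrow> real" where
  "regularizer c a b t g w x = (\<Sum>k\<in>UNIV. c k * (- ln (bar x $ k))) + a * (x \<bullet> x)
     + b * (\<Sum>s\<in>{1..t}. (g s \<bullet> (x - w s))^2)"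

definition regularizer_D1 :: "('n option \<Rightarrow> real) \<Rightarrow> real \<Rightarrow> real \<Rightarrow> nat \<Rightarrow> (nat \<Rightarrow> real^'n) \<Rightarrow>
    (nat \<Rightarrow> real^'n) \<Rightarrow> real^'n::finite \<Rightarrow> real^'n \<Rightarrow> real" where
  "regularizer_D1 c a b t g w v x = (\<Sum>k\<in>UNIV. - (c k * bar_lin v k / bar x $ k)) + a * (2 * (x \<bullet> v))
     + b * (\<Sum>s\<in>{1..t}. 2 * (g s \<bullet> (x - w s)) * (g s \<bullet> v))"

definition regularizer_D2 :: "('n option \<Rightarrow> real) \<Rightarrow> real \<Rightarrow> real \<Rightarrow> nat \<Rightarrow> (nat \<Rightarrow> real^'n) \<Rightarrow>
    real^'n::finite \<Rightarrow> real^'n \<Rightarrow> real^'n \<Rightarrow> real" where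
  "regularizer_D2 c a b t g u v x = (\<Sum>k\<in>UNIV. c k * bar_lin v k * bar_lin u k / (bar x $ k)^2)
     + a * (2 * (u \<bullet> v)) + b * (\<Sum>s\<in>{1..t}. 2 * (g s \<bullet> u) * (g s \<bullet> v))"

definition barrier_D3 :: "('n option \<Rightarrow> real) \<Rightarrow> real^'n::finite \<Rightarrow> real^'n \<Rightarrow> real^'n \<Rightarrow> real^'n \<Rightarrow> real" where
  "barrier_D3 c z u v x = (\<Sum>k\<in>UNIV. - (2 * c k * bar_lin v k * bar_lin u k * bar_lin z k / (bar x $ k)^3))"

lemma regularizer_D2_commute: "regularizer_D2 c a b t g u v x = regularizer_D2 c a b t g v u x"
  unfolding regularizer_D2_def by (simp add: mult_ac inner_commute)

context
  fixes c :: "'n::finite option \<Rightarrow> real" and a b :: real and t :: nat and g w :: "nat \<Rightarrow> real^'n"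
begin

lemma has_derivative_regularizer:
  assumes "x \<in> simplexC_interior"
  shows "(regularizer c a b t g w has_derivative (\<lambda>v. regularizer_D1 c a b t g w v x)) (at x)"
proof -
  have pos: "\<forall>k. 0 < bar x $ k" using assms by (simp add: simplexC_interior_def)
  show ?thesis
    unfolding regularizer_def[abs_def] regularizer_D1_def
    apply (rule derivative_eq_intros refl has_derivative_bar_nth | use pos in force)+
    apply (auto simp: field_simps inner_commute sum_distrib_left intro!: sum.cong)
    done
qed

lemma has_derivative_regularizer_D1:
  assumes "x \<in> simplexC_interior"
  shows "(regularizer_D1 c a b t g w v has_derivative (\<lambda>u. regularizer_D2 c a b t g u v x)) (at x)"
proof -
  have pos: "0 < bar x $ k" for k using assms by (simp add: simplexC_interior_def)
  have "((\<lambda>y. C / bar y $ k) has_derivative (\<lambda>u. - (C * bar_lin u k / (bar x $ k)^2))) (at x)" for C k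
    apply (rule derivative_eq_intros refl has_derivative_bar_nth)+
    using pos[of k] by (auto simp: field_simps power2_eq_square)
  then have barrier: "((\<lambda>y. \<Sum>k\<in>UNIV. - (c k * bar_lin v k / bar y $ k)) has_derivative
     (\<lambda>u. \<Sum>k\<in>UNIV. c k * bar_lin v k * bar_lin u k / (bar x $ k)^2)) (at x)"
    by (auto intro!: has_derivative_sum has_derivative_minus[THEN has_derivative_eq_rhs])
  have quad: "((\<lambda>y. a * (2 * (y \<bullet> v)) + b * (\<Sum>s\<in>{1..t}. 2 * (g s \<bullet> (y - w s)) * (g s \<bullet> v)))
     has_derivative (\<lambda>u. a * (2 * (u \<bullet> v)) + b * (\<Sum>s\<in>{1..t}. 2 * (g s \<bullet> u) * (g s \<bullet> v)))) (at x)"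
    by (auto intro!: derivative_eq_intros)
  show ?thesis
    unfolding regularizer_D1_def[abs_def] regularizer_D2_def
    using has_derivative_add[OF barrier quad] by (simp add: add.assoc)
qed

lemma has_derivative_regularizer_D2:
  assumes "x \<in> simplexC_interior"
  shows "(regularizer_D2 c a b t g u v has_derivative (\<lambda>z. barrier_D3 c z u v x)) (at x)"
proof -
  have pos: "0 < bar x $ k" for k using assms by (simp add: simplexC_interior_def)
  have "((\<lambda>y. C / (bar y $ k)^2) has_derivative (\<lambda>z. - (2 * C * bar_lin z k / (bar x $ k)^3))) (at x)" for C k
    apply (rule derivative_eq_intros refl has_derivative_bar_nth)+
    using pos[of k] by (auto simp: field_simps power2_eq_square power3_eq_cube)
  then have "((\<lambda>y. \<Sum>k\<in>UNIV. c k * bar_lin v k * bar_lin u k / (bar y $ k)^2) has_derivative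
     (\<lambda>z. barrier_D3 c z u v x)) (at x)"
    unfolding barrier_D3_def
    by (auto intro!: has_derivative_sum[THEN has_derivative_eq_rhs] simp: mult_ac)
  then show ?thesis
    unfolding regularizer_D2_def[abs_def]
    using has_derivative_add[OF has_derivative_add[OF _ has_derivative_const] has_derivative_const] by simp
qed

lemma frechet_derivative_regularizer_D1:
  assumes "x \<in> simplexC_interior"
  shows "frechet_derivative (\<lambda>y. frechet_derivative (regularizer c a b t g w) (at y) v) (at x)
    = (\<lambda>u. regularizer_D2 c a b t g u v x)"
  by (rule frechet_derivative_eq_on_open[OF open_simplexC_interior assms _
        has_derivative_regularizer_D1[OF assms]])
    (rule frechet_derivative_apply[OF has_derivative_regularizer])

lemma frechet_derivative_regularizer_D2:
  assumes "x \<in> simplexC_interior"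
  shows "frechet_derivative (\<lambda>z. frechet_derivative
      (\<lambda>y. frechet_derivative (regularizer c a b t g w) (at y) v) (at z) u) (at x)
    = (\<lambda>q. barrier_D3 c q u v x)"
  by (rule frechet_derivative_eq_on_open[OF open_simplexC_interior assms _
        has_derivative_regularizer_D2[OF assms]])
    (simp add: frechet_derivative_regularizer_D1)

lemma D2_regularizer:
  "x \<in> simplexC_interior \<Longrightarrow> D2 (regularizer c a b t g w) x u = regularizer_D2 c a b t g u u x"
  by (simp add: D2_def frechet_derivative_regularizer_D1)

lemma D3_regularizer:
  "x \<in> simplexC_interior \<Longrightarrow> D3 (regularizer c a b t g w) x u = barrier_D3 c u u u x"
  by (simp add: D3_def frechet_derivative_regularizer_D2)

lemma hess_regularizer:
  "x \<in> simplexC_interior \<Longrightarrow>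
    hess (regularizer c a b t g w) x $ i $ j = regularizer_D2 c a b t g (axis i 1) (axis j 1) x"
  by (simp add: hess_def frechet_derivative_regularizer_D1)

lemma cont_diff_regularizer: "cont_diff 3 simplexC_interior (regularizer c a b t g w)"
proof -
  have D3_cont: "continuous_on simplexC_interior (barrier_D3 c z u v)" for z u v
    unfolding barrier_D3_def[abs_def]
    by (intro continuous_on_sum continuous_on_minus continuous_on_divide continuous_on_mult
        continuous_on_power continuous_on_const continuous_on_bar_nth)
      (simp_all add: bar_nonzero_simplexC_interior)
  have D2_cont_diff: "cont_diff (Suc 0) simplexC_interior (regularizer_D2 c a b t g u v)" for u v
    by (rule cont_diff_SucI[OF open_simplexC_interior, where f' = "\<lambda>z. barrier_D3 c z u v"])
      (simp_all add: has_derivative_regularizer_D2 D3_cont)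
  have D1_cont_diff: "cont_diff (Suc (Suc 0)) simplexC_interior (regularizer_D1 c a b t g w v)" for v
    by (rule cont_diff_SucI[OF open_simplexC_interior, where f' = "\<lambda>u. regularizer_D2 c a b t g u v"])
      (simp_all del: cont_diff.simps add: has_derivative_regularizer_D1 D2_cont_diff)
  show ?thesis
    unfolding numeral_3_eq_3
    by (rule cont_diff_SucI[OF open_simplexC_interior, where f' = "regularizer_D1 c a b t g w"])
      (simp_all del: cont_diff.simps add: has_derivative_regularizer D1_cont_diff)
qed

end

lemma convex_regularizer:
  assumes "\<forall>k. c k \<ge> 0" "a \<ge> 0" "b \<ge> 0"
  shows "convex_on simplexC_interior (regularizer c a b t g w)"
proof -
  have "convex_on {0<..} (\<lambda>y::real. - ln y)"
    using ln_concave by (simp add: concave_on_def)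
  then have "convex_on simplexC_interior (\<lambda>x. - ln (bar x $ k))" for k
    by (rule convex_on_comp_affine[OF _ convex_simplexC_interior])
      (auto simp: simplexC_interior_def bar_convex_comb)
  then have barrier: "convex_on simplexC_interior (\<lambda>x. \<Sum>k\<in>UNIV. c k * (- ln (bar x $ k)))"
    using assms(1) by (intro convex_on_sum_fun convex_simplexC_interior convex_on_cmul) auto
  have "convex_on simplexC_interior (\<lambda>x::real^'n. (x $ j)^2)" for j
    by (rule convex_on_comp_affine[OF convex_power2 convex_simplexC_interior]) auto
  then have "convex_on simplexC_interior (\<lambda>x::real^'n. \<Sum>j\<in>UNIV. (x $ j)^2)"
    by (intro convex_on_sum_fun convex_simplexC_interior) auto
  then have norm: "convex_on simplexC_interior (\<lambda>x::real^'n. a * (x \<bullet> x))"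
    using assms(2) by (intro convex_on_cmul) (auto simp: inner_vec_def power2_eq_square)
  have "convex_on simplexC_interior (\<lambda>x. b * (\<Sum>s\<in>{1..t}. (g s \<bullet> (x - w s))^2))"
    using assms(3)
    by (intro convex_on_sum_fun convex_simplexC_interior convex_on_cmul convex_on_inner_diff_square) auto
  then show ?thesis
    unfolding regularizer_def[abs_def] by (intro convex_on_add barrier norm)
qed

lemma regularizer_ge_barrier_term:
  assumes x: "x \<in> simplexC_interior" and c: "\<forall>k. c k \<ge> 0" and "a \<ge> 0" "b \<ge> 0"
  shows "c k * (- ln (bar x $ k)) \<le> regularizer c a b t g w x"
proof -
  have "0 \<le> c j * (- ln (bar x $ j))" for j
  proof -
    have "0 < bar x $ j" using x by (simp add: simplexC_interior_def)
    moreover have "bar x $ j \<le> 1" using x simplexC_interior_subset by (blast intro: bar_nth_le_1)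
    ultimately show ?thesis using c by (simp add: mult_nonneg_nonpos)
  qed
  then have "c k * (- ln (bar x $ k)) \<le> (\<Sum>j\<in>UNIV. c j * (- ln (bar x $ j)))"
    by (intro member_le_sum) auto
  moreover have "0 \<le> a * (x \<bullet> x) + b * (\<Sum>s\<in>{1..t}. (g s \<bullet> (x - w s))^2)"
    using assms(3,4) by (simp add: sum_nonneg)
  ultimately show ?thesis unfolding regularizer_def by linarith
qed

lemma regularizer_tendsto_frontier:
  assumes c: "\<forall>k. c k > 0" and "a \<ge> 0" "b \<ge> 0"
    and xs: "\<And>n. xs n \<in> simplexC_interior" and lim: "xs \<longlonglongrightarrow> x" and x: "x \<in> frontier simplexC"
  shows "filterlim (\<lambda>n. regularizer c a b t g w (xs n)) at_top sequentially"
proof -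
  obtain k where k: "bar x $ k = 0" using frontier_simplexC_bar_zero[OF x] .
  have "((\<lambda>n. bar (xs n) $ k) \<longlongrightarrow> 0) sequentially"
    using isCont_tendsto_compose[OF has_derivative_continuous[OF has_derivative_bar_nth[of k]] lim] k
    by simp
  moreover have "\<forall>\<^sub>F n in sequentially. 0 < bar (xs n) $ k"
    using xs by (simp add: simplexC_interior_def)
  ultimately have "filterlim (\<lambda>n. bar (xs n) $ k) (at_right 0) sequentially"
    by (rule tendsto_imp_filterlim_at_right)
  then have "filterlim (\<lambda>n. ln (bar (xs n) $ k)) at_bot sequentially"
    by (rule filterlim_compose[OF ln_at_0])
  then have "filterlim (\<lambda>n. - ln (bar (xs n) $ k)) at_top sequentially"
    by (simp add: filterlim_uminus_at_bot)
  then have "filterlim (\<lambda>n. c k * (- ln (bar (xs n) $ k))) at_top sequentially"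
    using c by (intro filterlim_tendsto_pos_mult_at_top[OF tendsto_const]) auto
  moreover have "c k * (- ln (bar (xs n) $ k)) \<le> regularizer c a b t g w (xs n)" for n
    using c assms(2,3) by (intro regularizer_ge_barrier_term[OF xs]) (auto intro: less_imp_le)
  ultimately show ?thesis
    by (auto intro: filterlim_at_top_mono always_eventually)
qed

section \<open>Self-concordance\<close>

lemma regularizer_D2_diag:
  "regularizer_D2 c a b t g u u x = (\<Sum>k\<in>UNIV. c k * (bar_lin u k / bar x $ k)^2)
     + 2 * a * (u \<bullet> u) + 2 * b * (\<Sum>s\<in>{1..t}. (g s \<bullet> u)^2)"
  unfolding regularizer_D2_def
  by (simp add: power2_eq_square sum_distrib_left mult_ac)

lemma barrier_D3_diag:
  "barrier_D3 c u u u x = - 2 * (\<Sum>k\<in>UNIV. c k * (bar_lin u k / bar x $ k)^3)"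
  unfolding barrier_D3_def
  by (simp add: power3_eq_cube sum_negf sum_distrib_left mult_ac)

context
  fixes E :: real and c :: "'n::finite option \<Rightarrow> real"
  assumes E: "E > 0" and c_ge: "\<forall>k. c k \<ge> 1 / E"
begin

lemma weights_pos: "c k > 0"
  using c_ge E by (metis less_le_trans zero_less_divide_1_iff)

context
  fixes a b :: real
  assumes a: "a \<ge> 0" and b: "b \<ge> 0"
begin

lemma barrier_part_le_regularizer_D2:
  "(\<Sum>k\<in>UNIV. c k * (bar_lin u k / bar x $ k)^2) \<le> regularizer_D2 c a b t g u u x"
proof -
  have "0 \<le> 2 * a * (u \<bullet> u) + 2 * b * (\<Sum>s\<in>{1..t}. (g s \<bullet> u)^2)"
    using a b by (simp add: sum_nonneg)
  then show ?thesis by (simp add: regularizer_D2_diag)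
qed

lemma regularizer_D2_diag_nonneg: "0 \<le> regularizer_D2 c a b t g u u x"
  using weights_pos
  by (intro order_trans[OF _ barrier_part_le_regularizer_D2] sum_nonneg mult_nonneg_nonneg)
    (auto intro: less_imp_le)

lemma bar_lin_ratio_le:
  "\<bar>bar_lin u k / bar x $ k\<bar> \<le> sqrt E * sqrt (regularizer_D2 c a b t g u u x)"
proof -
  define y where "y = bar_lin u k / bar x $ k"
  have "c k * y^2 \<le> (\<Sum>k\<in>UNIV. c k * (bar_lin u k / bar x $ k)^2)"
    unfolding y_def by (intro member_le_sum) (auto intro!: mult_nonneg_nonneg less_imp_le[OF weights_pos])
  also have "\<dots> \<le> regularizer_D2 c a b t g u u x"
    by (rule barrier_part_le_regularizer_D2)
  finally have "E * (c k * y^2) \<le> E * regularizer_D2 c a b t g u u x"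
    using E by simp
  moreover have "y^2 \<le> E * (c k * y^2)"
    using c_ge E mult_right_mono[of 1 "E * c k" "y^2"] by (simp add: field_simps)
  ultimately have "sqrt (y^2) \<le> sqrt (E * regularizer_D2 c a b t g u u x)"
    by (intro real_sqrt_le_mono) linarith
  then show ?thesis by (simp add: y_def real_sqrt_mult)
qed

lemma barrier_D3_diag_le:
  "\<bar>barrier_D3 c u u u x\<bar> \<le> 2 * sqrt E * (sqrt (regularizer_D2 c a b t g u u x))^3"
proof -
  define y where "y k = bar_lin u k / bar x $ k" for k
  define D where "D = regularizer_D2 c a b t g u u x"
  have c_nonneg: "0 \<le> c k" for k using weights_pos less_imp_le by blast
  have "\<bar>\<Sum>k\<in>UNIV. c k * (y k)^3\<bar> \<le> (\<Sum>k\<in>UNIV. (c k * (y k)^2) * \<bar>y k\<bar>)"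
    using sum_abs[of "\<lambda>k. c k * (y k)^3" UNIV] c_nonneg
    by (simp add: abs_mult power2_eq_square power3_eq_cube mult_ac)
  also have "\<dots> \<le> (\<Sum>k\<in>UNIV. (c k * (y k)^2) * (sqrt E * sqrt D))"
    using bar_lin_ratio_le c_nonneg
    by (intro sum_mono mult_left_mono) (auto simp: y_def D_def)
  also have "\<dots> \<le> D * (sqrt E * sqrt D)"
    using barrier_part_le_regularizer_D2 E regularizer_D2_diag_nonneg
    by (simp add: sum_distrib_right[symmetric] y_def D_def mult_right_mono)
  also have "\<dots> = sqrt E * (sqrt D)^3"
    using regularizer_D2_diag_nonneg by (simp add: D_def power3_eq_cube mult_ac)
  finally show ?thesis
    by (simp add: barrier_D3_diag abs_mult y_def D_def)
qed

lemma dikin_ellipsoid_subset: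
  assumes x: "x \<in> simplexC_interior" and "\<theta> \<ge> 0"
    and step: "\<theta> * (sqrt E * sqrt (regularizer_D2 c a b t g p p x)) < 1"
  shows "x - \<theta> *\<^sub>R p \<in> simplexC_interior"
proof -
  have "0 < bar x $ k - \<theta> * bar_lin p k" for k
  proof -
    have pos: "0 < bar x $ k" using x by (simp add: simplexC_interior_def)
    then have "\<bar>bar_lin p k\<bar> \<le> sqrt E * sqrt (regularizer_D2 c a b t g p p x) * bar x $ k"
      using bar_lin_ratio_le[of p k x t g] by (simp add: abs_div field_simps)
    then have "\<theta> * \<bar>bar_lin p k\<bar> \<le> \<theta> * (sqrt E * sqrt (regularizer_D2 c a b t g p p x)) * bar x $ k"
      using \<open>\<theta> \<ge> 0\<close> by (simp add: mult_left_mono mult.assoc)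
    also have "\<dots> < bar x $ k"
      using step pos by simp
    finally show ?thesis
      using \<open>\<theta> \<ge> 0\<close> abs_ge_self[of "bar_lin p k"] mult_left_mono by (smt (verit))
  qed
  then show ?thesis by (simp add: simplexC_interior_def bar_diff_scaleR)
qed

end

end

lemma self_concordant_regularizer:
  fixes c :: "'n::finite option \<Rightarrow> real"
  assumes E: "E > 0" and c_ge: "\<forall>k. c k \<ge> 1 / E" and a: "a \<ge> 0" and b: "b \<ge> 0"
  shows "self_concordant simplexC (regularizer c a b t g w) (sqrt E)"
  unfolding self_concordant_def interior_simplexC
proof (intro conjI allI impI ballI convex_simplexC compact_simplexC simplexC_interior_nonempty
    cont_diff_regularizer)
  have c_pos: "\<forall>k. c k > 0" using weights_pos[OF E c_ge] by blast
  then show "convex_on simplexC_interior (regularizer c a b t g w)"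
    using a b by (intro convex_regularizer) (auto intro: less_imp_le)
  show "0 \<le> sqrt E" using E by simp
  fix xs :: "nat \<Rightarrow> real^'n" and x assume "\<forall>k. xs k \<in> simplexC_interior" "xs \<longlonglongrightarrow> x" "x \<in> frontier simplexC"
  then show "filterlim (\<lambda>k. regularizer c a b t g w (xs k)) at_top sequentially"
    using regularizer_tendsto_frontier[OF c_pos a b] by blast
next
  fix x u :: "real^'n" assume x: "x \<in> simplexC_interior"
  show "\<bar>D3 (regularizer c a b t g w) x u\<bar> \<le> 2 * sqrt E * sqrt (D2 (regularizer c a b t g w) x u) ^ 3"
    unfolding D2_regularizer[OF x] D3_regularizer[OF x] by (rule barrier_D3_diag_le[OF E c_ge a b])
qed

section \<open>Damped Newton steps\<close>

lemma linear_regularizer_D2: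
  "x \<in> simplexC_interior \<Longrightarrow> linear (\<lambda>u. regularizer_D2 c a b t g u v x)"
  using has_derivative_regularizer_D1 has_derivative_linear by blast

lemma hess_regularizer_mult_inner:
  fixes c :: "'n::finite option \<Rightarrow> real"
  assumes x: "x \<in> simplexC_interior"
  shows "(hess (regularizer c a b t g w) x *v q) \<bullet> p = regularizer_D2 c a b t g p q x"
proof -
  have lin: "linear (\<lambda>u. regularizer_D2 c a b t g u v x)" for v
    using linear_regularizer_D2[OF x] .
  have "(hess (regularizer c a b t g w) x *v q) $ i = regularizer_D2 c a b t g (axis i 1) q x" for i
    using linear_eq_sum_axis[OF lin[of "axis i 1"], of q]
    by (simp add: matrix_vector_mult_def hess_regularizer[OF x] regularizer_D2_commute[of _ _ _ _ _ "axis i 1"]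
        mult.commute)
  then show ?thesis
    using linear_eq_sum_axis[OF lin[of q], of p] by (simp add: inner_vec_def mult.commute)
qed

lemma hess_regularizer_mult_inv:
  fixes c :: "'n::finite option \<Rightarrow> real" and t :: nat and g w :: "nat \<Rightarrow> real^'n"
  assumes x: "x \<in> simplexC_interior" and c: "\<forall>k. c k \<ge> 0" and a: "a > 0" and b: "b \<ge> 0"
  defines "H \<equiv> hess (regularizer c a b t g w) x"
  shows "H *v (matrix_inv H *v y) = y"
proof -
  have "q = 0" if "H *v q = 0" for q
  proof -
    have "regularizer_D2 c a b t g q q x = 0"
      using that hess_regularizer_mult_inner[OF x, of c a b t g w q q] by (simp add: H_def)
    moreover have "0 \<le> (\<Sum>k\<in>UNIV. c k * (bar_lin q k / bar x $ k)^2)"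
      "0 \<le> 2 * b * (\<Sum>s\<in>{1..t}. (g s \<bullet> q)^2)"
      using c b by (simp_all add: sum_nonneg)
    ultimately have "a * (q \<bullet> q) \<le> 0" by (simp add: regularizer_D2_diag)
    then have "q \<bullet> q \<le> 0" using a by (simp add: mult_le_0_iff)
    then show "q = 0" by (metis antisym inner_ge_zero inner_eq_zero_iff)
  qed
  then obtain B where "B ** H = mat 1" using matrix_left_invertible_ker by blast
  then have "H ** B = mat 1 \<and> B ** H = mat 1" using matrix_left_right_inverse by blast
  then have "H ** matrix_inv H = mat 1"
    unfolding matrix_inv_def by (rule someI2) blast
  then show ?thesis by (simp add: matrix_vector_mul_assoc)
qed

lemma damped_newton_step_in_simplexC_interior:
  fixes c :: "'n::finite option \<Rightarrow> real"
  assumes x: "x \<in> simplexC_interior" and E: "E > 0" and c_ge: "\<forall>k. c k \<ge> 1 / E"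
    and a: "a > 0" and b: "b \<ge> 0"
    and p: "p = matrix_inv (hess (regularizer c a b t g w) x) *v y"
  shows "x - (1 / (1 + 4 * sqrt E * sqrt (y \<bullet> p))) *\<^sub>R p \<in> simplexC_interior"
proof -
  have c: "\<forall>k. c k \<ge> 0" using weights_pos[OF E c_ge] less_imp_le by blast
  define D where "D = regularizer_D2 c a b t g p p x"
  have yp: "y \<bullet> p = D"
    using hess_regularizer_mult_inner[OF x, of c a b t g w p p] hess_regularizer_mult_inv[OF x c a b]
    by (simp add: p D_def)
  have "0 \<le> D"
    unfolding D_def using a by (intro regularizer_D2_diag_nonneg[OF E c_ge _ b]) simp
  then have "0 \<le> sqrt E * sqrt D" using E by simp
  then have "1 / (1 + 4 * sqrt E * sqrt (y \<bullet> p)) * (sqrt E * sqrt D) < 1"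
    "0 \<le> 1 / (1 + 4 * sqrt E * sqrt (y \<bullet> p))"
    unfolding yp by (simp_all add: field_simps)
  then show ?thesis
    unfolding D_def by (rule dikin_ellipsoid_subset[OF E c_ge less_imp_le[OF a] b x, rotated])
qed

section \<open>DONS\<close>

lemma dons_Phi_eq_regularizer:
  fixes rho :: "nat \<Rightarrow> real^('n::finite option)"
  shows "dons_Phi \<eta> \<beta> T rho g w t =
    regularizer (\<lambda>k. 1 / dons_eta \<eta> T (rho t) k) (\<beta> * dim_d TYPE('n) / 8) (\<beta> / 8) t g w"
  by (rule ext) (simp add: dons_Phi_def dons_Psi_def regularizer_def power2_norm_eq_inner sum_negf[symmetric])

lemma inverse_dons_eta_ge:
  fixes rho :: "real^('n::finite option)"
  assumes T: "T > 1" and eta: "\<eta> > 0" and rho: "0 < rho $ k" "rho $ k \<le> dim_d TYPE('n) * real T"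
  shows "1 / (\<eta> * exp 1) \<le> 1 / dons_eta \<eta> T rho k"
proof -
  have "0 < rho $ k / dim_d TYPE('n)" "rho $ k / dim_d TYPE('n) \<le> real T"
    using rho by (auto simp: dim_d_def field_simps)
  then have "log (real T) (rho $ k / dim_d TYPE('n)) \<le> 1"
    using T log_le_cancel_iff[of "real T" _ "real T"] by simp
  then show ?thesis
    using eta by (simp add: dons_eta_def frac_le)
qed

lemma bar_damped_mix_ge:
  fixes w :: "real^'n::finite"
  assumes "w \<in> simplexC" and "T \<ge> 1"
  shows "1 / (real CARD('n option) * T)
    \<le> bar ((1 - 1 / T) *\<^sub>R w + (1 / (real CARD('n option) * T)) *\<^sub>R (\<chi> i. 1)) $ k"
proof -
  have "0 \<le> (1 - 1 / T) * bar w $ k"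
    using assms by (simp add: simplexC_eq_bar_nonneg)
  then show ?thesis
    using bar_mix_uniform[of "1 / T" w k] by (simp add: mult.commute)
qed

lemma dons_rho_bounded_w_interior:
  fixes rho :: "nat \<Rightarrow> real^('n::finite option)" and w u g nab :: "nat \<Rightarrow> real^'n"
  defines "d \<equiv> real CARD('n option)"
  assumes T: "T > 1" and eta: "\<eta> > 0" and beta: "\<beta> > 0"
    and w1: "w 1 = (\<chi> i. 1 / d)"
    and rho0: "rho 0 = (\<chi> i. d)"
    and u_def: "\<forall>t\<ge>1. u t = (1 - 1 / real T) *\<^sub>R w t + (1 / (d * real T)) *\<^sub>R (\<chi> i. 1)"
    and rho_def: "\<forall>t\<ge>1. \<forall>i. rho t $ i =
        (if 2 * rho (t - 1) $ i < 1 / (bar (u t) $ i) then 1 / (bar (u t) $ i) else rho (t - 1) $ i)"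
    and w_def: "\<forall>t\<ge>1. w (t + 1) = w t -
        (1 / (1 + 4 * sqrt (exp 1 * \<eta>) *
           sqrt (nab t \<bullet> (matrix_inv (hess (dons_Phi \<eta> \<beta> T rho g w t) (w t)) *v nab t))))
        *\<^sub>R (matrix_inv (hess (dons_Phi \<eta> \<beta> T rho g w t) (w t)) *v nab t)"
  shows "(\<forall>i. 0 < rho t $ i \<and> rho t $ i \<le> d * real T) \<and> (t \<ge> 1 \<longrightarrow> w t \<in> simplexC_interior)"
proof (induction t)
  case 0
  show ?case using T by (simp add: rho0 d_def)
next
  case (Suc t)
  have w: "w (Suc t) \<in> simplexC_interior"
  proof (cases "t = 0")
    case True
    have "bar (w (Suc 0)) $ k > 0" for k
      unfolding One_nat_def[symmetric] w1 by (cases k) (auto simp: bar_def d_def field_simps)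
    then show ?thesis using True by (simp add: simplexC_interior_def)
  next
    case False
    then have wt: "w t \<in> simplexC_interior" and rho: "\<forall>i. 0 < rho t $ i \<and> rho t $ i \<le> d * real T"
      using Suc.IH by auto
    define p where "p = matrix_inv (hess (dons_Phi \<eta> \<beta> T rho g w t) (w t)) *v nab t"
    have "w t - (1 / (1 + 4 * sqrt (\<eta> * exp 1) * sqrt (nab t \<bullet> p))) *\<^sub>R p \<in> simplexC_interior"
      using wt rho eta beta T inverse_dons_eta_ge[of T \<eta> "rho t"]
      by (intro damped_newton_step_in_simplexC_interior[OF _ _ _ _ _ p_def[unfolded dons_Phi_eq_regularizer]])
        (auto simp: dim_d_def d_def)
    then show ?thesis using w_def False by (simp add: p_def mult.commute)
  qed
  have "0 < rho (Suc t) $ i \<and> rho (Suc t) $ i \<le> d * real T" for i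
  proof -
    have lb: "1 / (d * real T) \<le> bar (u (Suc t)) $ i"
      using bar_damped_mix_ge[of "w (Suc t)" "real T" i] w simplexC_interior_subset T u_def
      by (auto simp: d_def)
    moreover have "0 < 1 / (d * real T)" using T by (simp add: d_def)
    ultimately have pos: "0 < bar (u (Suc t)) $ i" by linarith
    have "1 \<le> bar (u (Suc t)) $ i * (d * real T)"
      using lb T by (simp add: d_def divide_le_eq)
    then have "0 < 1 / bar (u (Suc t)) $ i" "1 / bar (u (Suc t)) $ i \<le> d * real T"
      using pos by (simp_all add: divide_le_eq mult.commute)
    then show ?thesis
      using rho_def[rule_format, of "Suc t" i] Suc.IH by auto
  qed
  then show ?case using w by blast
qed

theorem lemma5:
  fixes r :: "nat \<Rightarrow> real^('n::finite option)"
    and rho :: "nat \<Rightarrow> real^('n option)"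
    and w u g nab :: "nat \<Rightarrow> real^'n"
    and \<eta> \<beta> :: real and T :: nat
  defines "d \<equiv> real CARD('n option)"
  assumes T: "T > 1" and eta: "\<eta> > 0" and beta: "\<beta> > 0"
    and returns: "\<forall>t\<ge>1. (\<forall>i. 0 \<le> r t $ i \<and> r t $ i \<le> 1) \<and> r t \<noteq> 0"
    and w1: "w 1 = (\<chi> i. 1 / d)"
    and rho0: "rho 0 = (\<chi> i. d)"
    and u_def: "\<forall>t\<ge>1. u t = (1 - 1 / real T) *\<^sub>R w t + (1 / (d * real T)) *\<^sub>R (\<chi> i. 1)"
    and g_def: "\<forall>t\<ge>1. g t = (1 / (r t \<bullet> bar (u t))) *\<^sub>R Jmap (r t)"
    and rho_def: "\<forall>t\<ge>1. \<forall>i. rho t $ i =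
        (if 2 * rho (t - 1) $ i < 1 / (bar (u t) $ i) then 1 / (bar (u t) $ i) else rho (t - 1) $ i)"
    and nab_def: "\<forall>t\<ge>1. nab t = grad (dons_Phi \<eta> \<beta> T rho g w t) (w t)
        + (\<Sum>s\<in>{1..t}. g s - grad (dons_Psi \<eta> T (rho s)) (w s) + grad (dons_Psi \<eta> T (rho (s - 1))) (w s))"
    and w_def: "\<forall>t\<ge>1. w (t + 1) = w t -
        (1 / (1 + 4 * sqrt (exp 1 * \<eta>) *
           sqrt (nab t \<bullet> (matrix_inv (hess (dons_Phi \<eta> \<beta> T rho g w t) (w t)) *v nab t))))
        *\<^sub>R (matrix_inv (hess (dons_Phi \<eta> \<beta> T rho g w t) (w t)) *v nab t)"
  shows "\<forall>t\<ge>1. \<exists>M. M \<le> sqrt (\<eta> * exp 1) \<and> self_concordant simplexC (dons_Phi \<eta> \<beta> T rho g w t) M"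
proof (intro allI impI)
  fix t :: nat assume "t \<ge> 1"
  have "\<forall>i. 0 < rho t $ i \<and> rho t $ i \<le> d * real T"
    using dons_rho_bounded_w_interior[OF T eta beta w1[unfolded d_def] rho0[unfolded d_def]
        u_def[unfolded d_def] rho_def w_def]
    by (simp add: d_def)
  then have "\<forall>k. 1 / (\<eta> * exp 1) \<le> 1 / dons_eta \<eta> T (rho t) k"
    using inverse_dons_eta_ge[OF T eta, of "rho t"] by (simp add: d_def dim_d_def)
  then have "self_concordant simplexC (dons_Phi \<eta> \<beta> T rho g w t) (sqrt (\<eta> * exp 1))"
    unfolding dons_Phi_eq_regularizer
    using eta beta by (intro self_concordant_regularizer) (simp_all add: dim_d_def)
  then show "\<exists>M. M \<le> sqrt (\<eta> * exp 1) \<and> self_concordant simplexC (dons_Phi \<eta> \<beta> T rho g w t) M"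
    by blast
qed

end
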